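(* Let $n \ge 1$ and let $a, b \ge 1$ be integers with $a + b \le 2n$. The number of Dyck paths of semilength $n+1$ whose first peak has height $a$ and whose last peak has height $b$ is \[ \binom{2n-a-b}{n-a} - \binom{2n-a-b}{n}. \]
   Context: A Dyck path of semilength $N$ is a lattice path from $(0,0)$ to $(2N,0)$ with steps $U=(1,1)$ and $D=(1,-1)$ never going below the $x$-axis. A peak is an up-step immediately followed by a down-step; its height is the $y$-coordinate at the end of its up-step. Binomial coefficients $\binom{p}{q}$ are $0$ when $q<0$ or $q>p$. *)

theory Defs
  imports Main
begin

text \<open>A lattice path is encoded as a list of steps: True = up-step U, False = down-step D.\<close>

definition ht :: "bool list \<Rightarrow> int" where
  "ht p = (\<Sum>s\<leftarrow>p. if s then 1 else -1)"

definition dyck_path :: "nat \<Rightarrow> bool list \<Rightarrow> bool" where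
  "dyck_path N p \<longleftrightarrow> length p = 2 * N \<and> ht p = 0 \<and>
     (\<forall>k \<le> length p. ht (take k p) \<ge> 0)"

definition is_peak :: "bool list \<Rightarrow> nat \<Rightarrow> bool" where
  "is_peak p i \<longleftrightarrow> Suc i < length p \<and> p ! i \<and> \<not> p ! Suc i"

definition peak_height :: "bool list \<Rightarrow> nat \<Rightarrow> int" where
  "peak_height p i = ht (take (Suc i) p)"

definition first_peak_height :: "bool list \<Rightarrow> int" where
  "first_peak_height p = peak_height p (LEAST i. is_peak p i)"

definition last_peak_height :: "bool list \<Rightarrow> int" where
  "last_peak_height p = peak_height p (GREATEST i. is_peak p i)"

definition binom :: "int \<Rightarrow> int \<Rightarrow> int" where
  "binom p q = (if 0 \<le> q \<and> q \<le> p then int (nat p choose nat q) else 0)"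

end

theory Submission
  imports Defs
begin

(* A Dyck path of semilength n + 1 whose first and last peaks have heights a and b, with
   a + b <= 2n, factors uniquely as U^a D w U D^b: the bound rules out U^(n+1) D^(n+1), the
   only path in which the first and last peak coincide. Here w is a path of length
   L = 2n - a - b from height a - 1 to height b - 1 that never goes below 0, i.e. one with
   n - a up-steps, and by the reflection principle there are C(L, n-a) - C(L, n) of them. *)

lemma ht_Nil [simp]: "ht [] = 0"
  by (simp add: ht_def)

lemma ht_Cons [simp]: "ht (s # xs) = (if s then 1 else -1) + ht xs"
  by (simp add: ht_def)

lemma ht_append [simp]: "ht (xs @ ys) = ht xs + ht ys"
  by (simp add: ht_def)

lemma ht_replicate_True [simp]: "ht (replicate k True) = int k"
  by (induction k) auto

lemma ht_replicate_False [simp]: "ht (replicate k False) = - int k"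
  by (induction k) auto

lemma ht_ge_neg_length: "- int (length xs) \<le> ht xs"
  by (induction xs) auto

lemma ht_eq_ups: "ht xs = 2 * int (length (filter id xs)) - int (length xs)"
  by (induction xs) auto

definition stays_nonneg :: "int \<Rightarrow> bool list \<Rightarrow> bool" where
  "stays_nonneg h xs \<longleftrightarrow> (\<forall>k \<le> length xs. 0 \<le> h + ht (take k xs))"

lemma stays_nonneg_Nil [simp]: "stays_nonneg h [] \<longleftrightarrow> 0 \<le> h"
  by (simp add: stays_nonneg_def)

lemma stays_nonneg_start: "stays_nonneg h xs \<Longrightarrow> 0 \<le> h"
  unfolding stays_nonneg_def by (metis le0 take0 ht_Nil add_0_right)

lemma stays_nonneg_Cons [simp]:
  "stays_nonneg h (s # xs) \<longleftrightarrow> 0 \<le> h \<and> stays_nonneg (h + (if s then 1 else -1)) xs"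
  unfolding stays_nonneg_def less_Suc_eq_le [symmetric] length_Cons All_less_Suc2
  by (simp add: add.assoc)

lemma stays_nonneg_append [simp]:
  "stays_nonneg h (xs @ ys) \<longleftrightarrow> stays_nonneg h xs \<and> stays_nonneg (h + ht xs) ys"
proof (induction xs arbitrary: h)
  case Nil
  then show ?case by (cases ys) auto
qed (auto simp: add.assoc)

lemma stays_nonneg_replicate_True [simp]: "stays_nonneg h (replicate k True) \<longleftrightarrow> 0 \<le> h"
proof (induction k arbitrary: h)
  case (Suc k)
  show ?case by (simp add: Suc.IH) arith
qed simp

lemma stays_nonneg_replicate_False [simp]: "stays_nonneg h (replicate k False) \<longleftrightarrow> int k \<le> h"
proof (induction k arbitrary: h)
  case (Suc k)
  show ?case by (simp add: Suc.IH) arith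
qed simp

definition nonneg_paths :: "nat \<Rightarrow> nat \<Rightarrow> nat \<Rightarrow> bool list set" where
  "nonneg_paths L h u = {xs. length xs = L \<and> length (filter id xs) = u \<and> stays_nonneg (int h) xs}"

lemma nonneg_paths_eq_ht:
  "nonneg_paths L h u = {xs. length xs = L \<and> ht xs = 2 * int u - int L \<and> stays_nonneg (int h) xs}"
  by (auto simp: nonneg_paths_def ht_eq_ups)

lemma finite_nonneg_paths: "finite (nonneg_paths L h u)"
  by (rule finite_subset [OF _ finite_lists_length_eq [of UNIV L]]) (auto simp: nonneg_paths_def)

lemma nonneg_paths_0: "nonneg_paths 0 h u = (if u = 0 then {[]} else {})"
  by (auto simp: nonneg_paths_def)

lemma Cons_mem_nonneg_paths_Suc:
  "s # xs \<in> nonneg_paths (Suc L) h u \<longleftrightarrow>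
     (if s then u \<noteq> 0 \<and> xs \<in> nonneg_paths L (Suc h) (u - 1)
      else h \<noteq> 0 \<and> xs \<in> nonneg_paths L (h - 1) u)"
proof (cases s)
  case True
  then show ?thesis by (auto simp: nonneg_paths_def add.commute)
next
  case False
  show ?thesis
  proof (cases h)
    case 0
    have "\<not> stays_nonneg (-1) xs" using stays_nonneg_start by fastforce
    then show ?thesis using False 0 by (simp add: nonneg_paths_def)
  next
    case (Suc h')
    then show ?thesis using False by (simp add: nonneg_paths_def)
  qed
qed

lemma nonneg_paths_Suc:
  "nonneg_paths (Suc L) h u =
     (if u = 0 then {} else Cons True ` nonneg_paths L (Suc h) (u - 1)) \<union>
     (if h = 0 then {} else Cons False ` nonneg_paths L (h - 1) u)"
proof (rule set_eqI)
  fix xs :: "bool list"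
  show "xs \<in> nonneg_paths (Suc L) h u \<longleftrightarrow> xs \<in>
     (if u = 0 then {} else Cons True ` nonneg_paths L (Suc h) (u - 1)) \<union>
     (if h = 0 then {} else Cons False ` nonneg_paths L (h - 1) u)"
  proof (cases xs)
    case Nil
    then show ?thesis by (auto simp: nonneg_paths_def)
  next
    case (Cons s ys)
    then show ?thesis by (cases s) (simp_all add: Cons_mem_nonneg_paths_Suc image_iff)
  qed
qed

lemma card_nonneg_paths_Suc:
  "card (nonneg_paths (Suc L) h u) =
     (if u = 0 then 0 else card (nonneg_paths L (Suc h) (u - 1))) +
     (if h = 0 then 0 else card (nonneg_paths L (h - 1) u))"
proof -
  have "Cons True ` A \<inter> Cons False ` B = {}" for A B :: "bool list set"
    by auto
  then show ?thesis
    by (simp add: nonneg_paths_Suc card_Un_disjoint finite_nonneg_paths card_image)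
qed

(* The hypothesis says that the end height h + 2u - L is at least -1; without it the formula
   fails, e.g. for L = 2 and h = u = 0. *)
theorem card_nonneg_paths:
  assumes "L \<le> h + 2 * u + 1"
  shows "card (nonneg_paths L h u) + (L choose (h + u + 1)) = L choose u"
  using assms
proof (induction L arbitrary: h u)
  case 0
  then show ?case by (simp add: nonneg_paths_0)
next
  case (Suc L)
  have up: "card (nonneg_paths L (Suc h) (u - 1)) + (L choose (h + u + 1)) = L choose (u - 1)"
    if "u \<noteq> 0" using Suc.IH [of "Suc h" "u - 1"] Suc.prems that by simp
  have down: "card (nonneg_paths L (h - 1) u) + (L choose (h + u)) = L choose u"
    if "h \<noteq> 0" using Suc.IH [of "h - 1" u] Suc.prems that by simp
  show ?case
    using up down Suc.prems
    by (cases u; cases h) (simp_all add: card_nonneg_paths_Suc binomial_eq_0)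
qed

lemma first_peak_height_replicate:
  assumes "1 \<le> A"
  shows "first_peak_height (replicate A True @ False # q) = int A"
proof -
  let ?p = "replicate A True @ False # q"
  have "(LEAST i. is_peak ?p i) = A - 1"
  proof (rule Least_equality)
    show "is_peak ?p (A - 1)"
      using assms by (simp add: is_peak_def nth_append)
  next
    fix i assume "is_peak ?p i"
    then show "A - 1 \<le> i"
      by (cases "Suc i < A") (auto simp: is_peak_def nth_append)
  qed
  then show ?thesis
    using assms by (simp add: first_peak_height_def peak_height_def)
qed

lemma last_peak_height_replicate:
  assumes "1 \<le> B"
  shows "last_peak_height (q @ True # replicate B False) = ht q + 1"
proof -
  let ?p = "q @ True # replicate B False"
  have "(GREATEST i. is_peak ?p i) = length q"
  proof (rule Greatest_equality)
    show "is_peak ?p (length q)"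
      using assms by (simp add: is_peak_def nth_append)
  next
    fix i assume "is_peak ?p i"
    then show "i \<le> length q"
      by (auto simp: is_peak_def nth_append nth_Cons' split: if_splits)
  qed
  then show ?thesis
    by (simp add: last_peak_height_def peak_height_def)
qed

lemma split_first_run:
  assumes "hd xs" and "False \<in> set xs"
  obtains A q where "1 \<le> A" and "xs = replicate A True @ False # q"
proof -
  define A where "A = length (takeWhile id xs)"
  have "\<forall>y \<in> set (takeWhile id xs). y = True"
    by (auto dest: set_takeWhileD)
  then have "takeWhile id xs = replicate A True"
    unfolding A_def by (simp add: replicate_length_same)
  moreover have "dropWhile id xs \<noteq> []"
    using assms(2) by auto
  then obtain q where "dropWhile id xs = False # q"
    using hd_dropWhile [of id xs] by (cases "dropWhile id xs") auto
  moreover have "1 \<le> A"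
    using assms unfolding A_def by (cases xs) auto
  ultimately show thesis
    using that takeWhile_dropWhile_id [of id xs] by metis
qed

lemma split_last_run:
  assumes "\<not> last xs" and "True \<in> set xs"
  obtains B q where "1 \<le> B" and "xs = q @ True # replicate B False"
proof -
  have "xs \<noteq> []" using assms(2) by auto
  then have "hd (map Not (rev xs))" and "False \<in> set (map Not (rev xs))"
    using assms by (auto simp: hd_map hd_rev)
  then obtain B q where "1 \<le> B" and "map Not (rev xs) = replicate B True @ False # q"
    by (rule split_first_run)
  note rev_eq = this(2)
  have "rev xs = map Not (map Not (rev xs))"
    by (simp add: comp_def)
  also have "\<dots> = replicate B False @ True # map Not q"
    by (simp add: rev_eq)
  finally have "xs = rev (replicate B False @ True # map Not q)"
    by (metis rev_rev_ident)
  then have "xs = rev (map Not q) @ True # replicate B False"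
    by simp
  then show thesis using that \<open>1 \<le> B\<close> by blast
qed

lemma dyck_path_iff_stays_nonneg:
  "dyck_path N p \<longleftrightarrow> length p = 2 * N \<and> ht p = 0 \<and> stays_nonneg 0 p"
  by (simp add: dyck_path_def stays_nonneg_def)

lemma dyck_path_hd:
  assumes "dyck_path N p" and "0 < N"
  shows "hd p"
proof -
  obtain s p' where p: "p = s # p'"
    using assms by (cases p) (auto simp: dyck_path_def)
  then have "stays_nonneg (if s then 1 else -1) p'"
    using assms(1) by (simp add: dyck_path_iff_stays_nonneg)
  then show ?thesis
    using p stays_nonneg_start by fastforce
qed

lemma dyck_path_last:
  assumes "dyck_path N p" and "0 < N"
  shows "\<not> last p"
proof -
  obtain p' s where p: "p = p' @ [s]"
    using assms by (cases p rule: rev_cases) (auto simp: dyck_path_def)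
  then have "stays_nonneg (ht p') [s]" and "ht p' + (if s then 1 else -1) = 0"
    using assms(1) by (auto simp: dyck_path_iff_stays_nonneg)
  then show ?thesis
    using p by (auto split: if_splits)
qed

lemma dyck_path_first_last_peak_decomp:
  assumes p: "dyck_path N p" and first: "first_peak_height p = int A"
    and last: "last_peak_height p = int B" and "A + B < 2 * N"
  obtains w where "p = replicate A True @ False # w @ True # replicate B False"
proof -
  have "0 < N" using assms(4) by simp
  have len: "length p = 2 * N" and ht_p: "ht p = 0"
    using p by (auto simp: dyck_path_def)
  have "p \<noteq> []" using len \<open>0 < N\<close> by auto
  then have "False \<in> set p"
    using dyck_path_last [OF p \<open>0 < N\<close>] last_in_set by fastforce
  then obtain A' q where "1 \<le> A'" and p_first: "p = replicate A' True @ False # q"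
    using split_first_run dyck_path_hd [OF p \<open>0 < N\<close>] by metis
  then have "A' = A"
    using first first_peak_height_replicate by simp
  have "True \<in> set q"
    \<comment> \<open>otherwise p = U^A D^A, whose first and last peaks coincide, so that A + B = 2N\<close>
  proof (rule ccontr)
    assume "True \<notin> set q"
    then have "q = replicate (length q) False"
      by (metis (full_types) replicate_length_same)
    moreover obtain m where "A = Suc m"
      using \<open>1 \<le> A'\<close> \<open>A' = A\<close> by (cases A) auto
    ultimately have "p = replicate m True @ True # replicate (Suc (length q)) False"
      using p_first \<open>A' = A\<close> by (metis replicate_Suc replicate_app_Cons_same append_Cons)
    then have "B = A" and "length q + 1 = A"
      using last ht_p \<open>A = Suc m\<close> last_peak_height_replicate [of "Suc (length q)"] by auto
    then show False
      using len p_first \<open>A' = A\<close> assms(4) by simp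
  qed
  moreover have "\<not> last q"
    using dyck_path_last [OF p \<open>0 < N\<close>] p_first calculation by (auto split: if_splits)
  ultimately obtain B' w where "1 \<le> B'" and q: "q = w @ True # replicate B' False"
    using split_last_run by metis
  then have p_last: "p = (replicate A True @ False # w) @ True # replicate B' False"
    using p_first \<open>A' = A\<close> by simp
  then have "B' = B"
    using last ht_p last_peak_height_replicate [OF \<open>1 \<le> B'\<close>, of "replicate A True @ False # w"]
    by simp
  then show thesis
    using that p_last by simp
qed

lemma dyck_paths_first_last_peak_eq_image:
  assumes "1 \<le> A" and "1 \<le> B" and "A + B \<le> 2 * n"
  shows "{p. dyck_path (n + 1) p \<and> first_peak_height p = int A \<and> last_peak_height p = int B} =
    (\<lambda>w. replicate A True @ False # w @ True # replicate B False) `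
      {w. length w = 2 * n - A - B \<and> ht w = int B - int A \<and> stays_nonneg (int A - 1) w}"
    (is "?S = ?f ` ?W")
proof (intro set_eqI iffI)
  fix p assume "p \<in> ?S"
  then obtain w where p: "p = ?f w"
    using dyck_path_first_last_peak_decomp [of "n + 1" p A B] assms(3) by auto
  then have "w \<in> ?W"
    using \<open>p \<in> ?S\<close> assms by (auto simp: dyck_path_iff_stays_nonneg)
  then show "p \<in> ?f ` ?W"
    using p by blast
next
  fix p assume "p \<in> ?f ` ?W"
  then obtain w where p: "p = ?f w" and "w \<in> ?W" by blast
  then have "dyck_path (n + 1) p"
    using assms by (auto simp: dyck_path_iff_stays_nonneg)
  moreover have "first_peak_height p = int A"
    using p first_peak_height_replicate [OF assms(1)] by simp
  moreover have "last_peak_height p = int B"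
    using p \<open>w \<in> ?W\<close> last_peak_height_replicate [OF assms(2), of "replicate A True @ False # w"]
    by simp
  ultimately show "p \<in> ?S" by blast
qed

lemma binom_of_nat: "binom (int p) (int q) = int (p choose q)"
  by (simp add: binom_def)

lemma card_nonneg_paths_from_to:
  assumes "1 \<le> A" and "A + B \<le> 2 * n"
  defines "L \<equiv> 2 * n - A - B"
  shows "int (card {w. length w = L \<and> ht w = int B - int A \<and> stays_nonneg (int A - 1) w})
           = binom (int L) (int n - int A) - binom (int L) (int n)"
    (is "int (card ?W) = _")
proof (cases "A \<le> n")
  case True
  then have "?W = nonneg_paths L (A - 1) (n - A)"
    using assms by (auto simp: nonneg_paths_eq_ht of_nat_diff)
  then have "int (card ?W) + int (L choose n) = int (L choose (n - A))"
    using card_nonneg_paths [of L "A - 1" "n - A"] assms True unfolding of_nat_add [symmetric]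
    by simp
  moreover have "binom (int L) (int n - int A) = int (L choose (n - A))"
    using binom_of_nat [of L "n - A"] True by (simp add: of_nat_diff)
  ultimately show ?thesis
    by (simp add: binom_of_nat)
next
  case False
  have W_empty: "?W = {}"
  proof (intro equals0I)
    fix w assume "w \<in> ?W"
    then show False
      using ht_ge_neg_length [of w] False assms by (simp add: of_nat_diff)
  qed
  show ?thesis
    unfolding W_empty using False assms by (simp add: binom_def)
qed

theorem mainTheorem6:
  fixes n :: nat and a b :: int
  assumes "n \<ge> 1" and "a \<ge> 1" and "b \<ge> 1" and "a + b \<le> 2 * int n"
  shows "int (card {p. dyck_path (n + 1) p \<and> first_peak_height p = a \<and> last_peak_height p = b})
           = binom (2 * int n - a - b) (int n - a) - binom (2 * int n - a - b) (int n)"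
proof -
  obtain A B :: nat where a: "a = int A" and b: "b = int B"
    using assms(2,3) by (metis zero_le_imp_eq_int order_trans zero_le_one)
  have A: "1 \<le> A" and B: "1 \<le> B" and AB: "A + B \<le> 2 * n"
    using assms a b by auto
  have "card {p. dyck_path (n + 1) p \<and> first_peak_height p = a \<and> last_peak_height p = b}
      = card {w. length w = 2 * n - A - B \<and> ht w = int B - int A \<and> stays_nonneg (int A - 1) w}"
    unfolding a b dyck_paths_first_last_peak_eq_image [OF A B AB]
    by (rule card_image) (simp add: inj_on_def)
  moreover have "2 * int n - a - b = int (2 * n - A - B)"
    using AB a b by simp
  ultimately show ?thesis
    using card_nonneg_paths_from_to [OF A AB] a by simp
qed


end
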